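(* Let $\mathbb{F}_q$ be the finite field with $q$ elements and characteristic $p$. Let $m$ be a positive integer dividing $q-1$ and let $H \subseteq \mathbb{F}_q^*$ be the multiplicative subgroup of index $m$ (so $|H|=(q-1)/m$). Let $k$ be an integer with $1\le k\le (q-1)/m$. For $b\in\mathbb{F}_q$ let $M_H(k,b)$ be the number of $k$-element subsets $S\subseteq H$ with $\sum_{a\in S}a=b$. Then for every $b\in\mathbb{F}_q^*$, $$\left|M_H(k,b)-\frac{1}{q}\binom{(q-1)/m}{k}\right|\le \frac{2}{\sqrt q}\binom{\sqrt q+k+\frac{q}{mp}}{k},$$ and for $b=0$, $$\left|M_H(k,0)-\frac{1}{q}\binom{(q-1)/m}{k}\right|\le \binom{\sqrt q+k+\frac{q}{mp}}{k}.$$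
   Context: For a real number $t$ and a nonnegative integer $k$, $\binom{t}{k}=\frac{t(t-1)\cdots(t-k+1)}{k!}$. *)

theory Defs
  imports Complex_Main
begin

definition subset_sum_count :: "'a::comm_monoid_add set \<Rightarrow> nat \<Rightarrow> 'a \<Rightarrow> nat" where
  "subset_sum_count H k b = card {S. S \<subseteq> H \<and> card S = k \<and> (\<Sum>a\<in>S. a) = b}"

definition mult_subgroup :: "'a::field set \<Rightarrow> bool" where
  "mult_subgroup H \<longleftrightarrow> H \<subseteq> - {0} \<and> 1 \<in> H \<and> (\<forall>x\<in>H. \<forall>y\<in>H. x * y \<in> H)
      \<and> (\<forall>x\<in>H. inverse x \<in> H)"

end

theory Submission
  imports Defs "HOL-Computational_Algebra.Formal_Power_Series" "HOL-Number_Theory.Cong"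
    "HOL-Analysis.Complex_Transcendental" "HOL-Analysis.L2_Norm"
begin

text \<open>Let \<open>n = card H\<close>, \<open>p\<close> the characteristic, and \<open>\<psi>\<close> a nontrivial additive character
  (one exists: take a maximal proper additive subgroup). By orthogonality,
  \<open>q M(k, b) = (\<Sum>c. \<psi> (- c b) e\<^sub>k(c))\<close>, where \<open>e\<^sub>k(c)\<close> is the \<open>k\<close>-th elementary symmetric
  function of the values \<open>\<psi> (c a)\<close>, \<open>a \<in> H\<close>. Newton's identities express \<open>e\<^sub>k(c)\<close> through the
  power sums, which are the Gauss periods \<open>S (j c)\<close>. For \<open>p dvd j\<close> these equal \<open>n\<close> whatever
  \<open>c\<close> is, and that part of the recursion produces a main term \<open>K\<^sub>k\<close> independent of \<open>c\<close>. For
  \<open>p\<close> not dividing \<open>j\<close> and \<open>c \<noteq> 0\<close> the periods obey \<open>|S (j c)| \<le> sqrt q\<close> and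
  \<open>\<Sum>c |S (j c)|\<^sup>2 \<le> q n\<close>. Hence \<open>G\<^sub>k = |K\<^sub>k| + \<parallel>e\<^sub>k - K\<^sub>k\<parallel>\<^sub>2 / sqrt n\<close>, with the \<open>L\<^sup>2\<close> norm
  over \<open>c \<noteq> 0\<close>, satisfies \<open>k G\<^sub>k \<le> \<Sum>j w\<^sub>j G\<^sub>k\<^sub>-\<^sub>j\<close> with \<open>w\<^sub>j = n\<close> for \<open>p dvd j\<close> and
  \<open>w\<^sub>j = sqrt q\<close> otherwise, a recursion dominated by \<open>(sqrt q + q / (m p) + k) gchoose k\<close>. For
  \<open>b \<noteq> 0\<close>, averaging over \<open>H\<close> turns the twist \<open>\<psi> (- c b)\<close> into a Gauss period, which gains
  a factor \<open>sqrt q\<close>.\<close>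

definition elementary_symmetric :: "('b \<Rightarrow> 'c::comm_ring_1) \<Rightarrow> 'b set \<Rightarrow> nat \<Rightarrow> 'c" where
  "elementary_symmetric z A k = (\<Sum>B | B \<subseteq> A \<and> card B = k. \<Prod>a\<in>B. z a)"

lemma fps_const_prod: "fps_const (\<Prod>x\<in>X. f x) = (\<Prod>x\<in>X. fps_const (f x))"
  by (induction X rule: infinite_finite_induct) (auto simp: fps_const_mult[symmetric])

lemma fps_nth_prod_linear:
  assumes "finite A"
  shows "fps_nth (\<Prod>a\<in>A. 1 + fps_const (z a) * fps_X) k = elementary_symmetric z A k"
proof -
  have "(\<Prod>a\<in>A. 1 + fps_const (z a) * fps_X) = (\<Prod>a\<in>A. fps_const (z a) * fps_X + 1)"
    by (simp add: add.commute)
  also have "\<dots> = (\<Sum>B\<in>Pow A. (\<Prod>a\<in>B. fps_const (z a) * fps_X) * (\<Prod>a\<in>A-B. 1))"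
    by (rule prod_add[OF assms])
  also have "\<dots> = (\<Sum>B\<in>Pow A. fps_const (\<Prod>a\<in>B. z a) * fps_X ^ card B)"
    by (intro sum.cong refl) (simp add: prod.distrib fps_const_prod)
  finally have "fps_nth (\<Prod>a\<in>A. 1 + fps_const (z a) * fps_X) k =
      (\<Sum>B\<in>Pow A. if card B = k then (\<Prod>a\<in>B. z a) else 0)"
    by (simp add: fps_sum_nth fps_X_power_nth eq_commute if_distrib cong: if_cong)
  also have "\<dots> = (\<Sum>B\<in>{B\<in>Pow A. card B = k}. \<Prod>a\<in>B. z a)"
    by (simp add: sum.inter_filter[symmetric] assms)
  also have "{B\<in>Pow A. card B = k} = {B. B \<subseteq> A \<and> card B = k}" by auto
  finally show ?thesis by (simp add: elementary_symmetric_def)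
qed

definition fps_alternating_geometric :: "'a::comm_ring_1 \<Rightarrow> 'a fps" where
  "fps_alternating_geometric w = Abs_fps (\<lambda>j. if j = 0 then 0 else (-1) ^ (j - 1) * w ^ j)"

lemma fps_alternating_geometric_eq:
  "(1 + fps_const w * fps_X) * fps_alternating_geometric w = fps_const w * fps_X"
proof (rule fps_ext)
  fix n
  show "fps_nth ((1 + fps_const w * fps_X) * fps_alternating_geometric w) n = fps_nth (fps_const w * fps_X) n"
  proof (cases n)
    case (Suc m)
    have "fps_nth ((1 + fps_const w * fps_X) * fps_alternating_geometric w) n
        = fps_nth (fps_alternating_geometric w) n + w * fps_nth (fps_alternating_geometric w) m"
      by (simp add: distrib_right Suc mult.assoc)
    then show ?thesis by (cases m) (auto simp: fps_alternating_geometric_def Suc)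
  qed (simp add: fps_alternating_geometric_def)
qed

lemma fps_X_deriv_prod_linear:
  assumes "finite A"
  shows "fps_X * fps_deriv (\<Prod>a\<in>A. 1 + fps_const (z a) * fps_X)
     = (\<Prod>a\<in>A. 1 + fps_const (z a) * fps_X) * (\<Sum>a\<in>A. fps_alternating_geometric (z a))"
  using assms
proof (induction A rule: finite_induct)
  case (insert x F)
  define P where "P = (\<Prod>a\<in>F. 1 + fps_const (z a) * fps_X)"
  define G where "G = (\<Sum>a\<in>F. fps_alternating_geometric (z a))"
  have IH: "fps_X * fps_deriv P = P * G" using insert P_def G_def by simp
  have "fps_X * fps_deriv ((1 + fps_const (z x) * fps_X) * P)
      = fps_const (z x) * fps_X * P + (1 + fps_const (z x) * fps_X) * (fps_X * fps_deriv P)"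
    by (simp add: algebra_simps)
  also have "\<dots> = (1 + fps_const (z x) * fps_X) * fps_alternating_geometric (z x) * P
      + (1 + fps_const (z x) * fps_X) * (P * G)"
    by (simp add: fps_alternating_geometric_eq IH)
  also have "\<dots> = ((1 + fps_const (z x) * fps_X) * P) * (fps_alternating_geometric (z x) + G)"
    by (simp add: algebra_simps)
  finally show ?case using insert by (simp add: P_def G_def)
qed simp

theorem newton_identity:
  assumes "finite A"
  shows "of_nat k * elementary_symmetric z A k
       = (\<Sum>j=1..k. (-1) ^ (j - 1) * (\<Sum>a\<in>A. z a ^ j) * elementary_symmetric z A (k - j))"
proof -
  let ?F = "\<Prod>a\<in>A. 1 + fps_const (z a) * fps_X"
  let ?g = "\<lambda>j. \<Sum>a\<in>A. fps_nth (fps_alternating_geometric (z a)) j"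
  have "of_nat k * elementary_symmetric z A k = fps_nth (fps_X * fps_deriv ?F) k"
    by (cases k) (simp_all add: fps_nth_prod_linear[OF assms])
  also have "\<dots> = fps_nth (?F * (\<Sum>a\<in>A. fps_alternating_geometric (z a))) k"
    by (simp add: fps_X_deriv_prod_linear[OF assms])
  also have "\<dots> = (\<Sum>i=0..k. elementary_symmetric z A i * ?g (k - i))"
    by (simp add: fps_mult_nth fps_nth_prod_linear[OF assms] fps_sum_nth)
  also have "\<dots> = (\<Sum>j=0..k. elementary_symmetric z A (k - j) * ?g j)"
    by (rule sum.reindex_bij_witness[where i="\<lambda>i. k - i" and j="\<lambda>i. k - i"]) auto
  also have "\<dots> = (\<Sum>j=1..k. elementary_symmetric z A (k - j) * ?g j)"
    by (rule sum.mono_neutral_right) (auto simp: fps_alternating_geometric_def)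
  also have "\<dots> = (\<Sum>j=1..k. (-1) ^ (j - 1) * (\<Sum>a\<in>A. z a ^ j) * elementary_symmetric z A (k - j))"
    by (intro sum.cong refl)
      (auto simp: fps_alternating_geometric_def sum_distrib_left sum_distrib_right mult_ac)
  finally show ?thesis .
qed

definition add_subgroup :: "'a::ab_group_add set \<Rightarrow> bool" where
  "add_subgroup K \<longleftrightarrow> 0 \<in> K \<and> (\<forall>x\<in>K. \<forall>y\<in>K. x + y \<in> K) \<and> (\<forall>x\<in>K. - x \<in> K)"

lemma add_subgroup_of_nat_mult:
  assumes "add_subgroup K" "x \<in> K"
  shows "of_nat j * (x::'a::ring_1) \<in> K"
  using assms by (induction j) (auto simp: add_subgroup_def distrib_right)

lemma add_subgroup_of_int_mult:
  assumes "add_subgroup K" "x \<in> K"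
  shows "of_int j * (x::'a::ring_1) \<in> K"
proof (cases "j \<ge> 0")
  case True
  then show ?thesis using add_subgroup_of_nat_mult[OF assms, of "nat j"] by simp
next
  case False
  define n where "n = nat (- j)"
  have "j = - int n" using False by (simp add: n_def)
  moreover have "- (of_nat n * x) \<in> K"
    using add_subgroup_of_nat_mult[OF assms] assms(1) by (simp add: add_subgroup_def)
  ultimately show ?thesis by simp
qed

lemma exists_maximal_proper_add_subgroup:
  fixes x :: "'a::{ab_group_add,finite}"
  assumes "x \<noteq> 0"
  obtains K :: "'a set" where "add_subgroup K" "K \<noteq> UNIV"
    "\<And>L. add_subgroup L \<Longrightarrow> K \<subset> L \<Longrightarrow> L = UNIV"
proof -
  define Fam where "Fam = {K::'a set. add_subgroup K \<and> K \<noteq> UNIV}"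
  have "{0} \<in> Fam" using assms by (auto simp: Fam_def add_subgroup_def)
  moreover have "finite Fam" by simp
  ultimately have "Max (card ` Fam) \<in> card ` Fam" by (intro Max_in) auto
  then obtain K where K: "K \<in> Fam" "card K = Max (card ` Fam)" by auto
  show ?thesis
  proof (rule that[of K])
    show "add_subgroup K" "K \<noteq> UNIV" using K by (auto simp: Fam_def)
    fix L assume L: "add_subgroup L" "K \<subset> L"
    show "L = UNIV"
    proof (rule ccontr)
      assume "L \<noteq> UNIV"
      then have "card L \<le> card K" using L K by (simp add: Fam_def)
      moreover have "card K < card L" using L by (intro psubset_card_mono) auto
      ultimately show False by simp
    qed
  qed
qed

text \<open>The inverse of \<open>j g\<close> is \<open>(p - 1) j g\<close>, where \<open>p\<close> is the characteristic.\<close>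
lemma add_subgroup_adjoin:
  assumes K: "add_subgroup K" and p: "CHAR('a) > 0"
  shows "add_subgroup {x::'a::ring_1. \<exists>j. x - of_nat j * g \<in> K}"
proof -
  have "0 - of_nat 0 * g \<in> K" using K by (simp add: add_subgroup_def)
  moreover have "\<exists>l. x + y - of_nat l * g \<in> K"
    if "x - of_nat i * g \<in> K" "y - of_nat j * g \<in> K" for x y i j
  proof -
    have "(x - of_nat i * g) + (y - of_nat j * g) \<in> K" using K that by (simp add: add_subgroup_def)
    then show ?thesis by (intro exI[of _ "i + j"]) (simp add: algebra_simps)
  qed
  moreover have "\<exists>l. - x - of_nat l * g \<in> K" if "x - of_nat i * g \<in> K" for x i
  proof -
    have "- (x - of_nat i * g) \<in> K" using K that unfolding add_subgroup_def by blast
    moreover have "of_nat ((CHAR('a) - 1) * i) = - (of_nat i :: 'a)"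
    proof -
      have "(CHAR('a) - 1) * i + i = CHAR('a) * i" using p by (simp add: diff_mult_distrib)
      then have "of_nat ((CHAR('a) - 1) * i) + of_nat i = (of_nat (CHAR('a) * i) :: 'a)"
        by (simp only: of_nat_add[symmetric])
      then show ?thesis by (simp add: eq_neg_iff_add_eq_0)
    qed
    ultimately show ?thesis by (intro exI[of _ "(CHAR('a) - 1) * i"]) (simp add: algebra_simps)
  qed
  ultimately show ?thesis unfolding add_subgroup_def by blast
qed

text \<open>In prime characteristic the coefficient of \<open>g \<notin> K\<close> is determined modulo \<open>K\<close>: otherwise
  an invertible residue times \<open>g\<close> would lie in \<open>K\<close>, and so would \<open>g\<close>.\<close>
lemma coset_coefficient_unique:
  fixes g x :: "'a::ring_1"
  assumes K: "add_subgroup K" and g: "g \<notin> K" and p: "prime CHAR('a)"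
    and i: "x - of_nat i * g \<in> K" and j: "x - of_nat j * g \<in> K"
  shows "of_nat i = (of_nat j :: 'a)"
proof (rule ccontr)
  define d where "d = int j - int i"
  assume "of_nat i \<noteq> (of_nat j :: 'a)"
  then have "\<not> int CHAR('a) dvd d"
    by (simp add: d_def of_int_eq_0_iff_char_dvd[symmetric])
  then have "coprime d (int CHAR('a))"
    using p prime_imp_coprime[of "int CHAR('a)" d] by (simp add: coprime_commute)
  then obtain e where "[d * e = 1] (mod int CHAR('a))" using cong_solve_coprime_int by blast
  then have ed: "of_int e * of_int d = (1::'a)"
    by (simp add: of_int_eq_iff_cong_CHAR[symmetric] mult.commute flip: of_int_mult)
  have "(x - of_nat i * g) + - (x - of_nat j * g) \<in> K"
    using K i j unfolding add_subgroup_def by blast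
  then have "of_int d * g \<in> K" by (simp add: d_def algebra_simps)
  then have "of_int e * (of_int d * g) \<in> K" by (rule add_subgroup_of_int_mult[OF K])
  then show False using g ed by (simp add: mult.assoc[symmetric])
qed

text \<open>\<open>idx x\<close> is the coefficient of \<open>g\<close> in \<open>x\<close> modulo \<open>K\<close>, an additive map onto the prime
  field.\<close>
lemma maximal_add_subgroup_index:
  fixes g :: "'a::ring_1"
  assumes K: "add_subgroup K" and Kmax: "\<And>L. add_subgroup L \<Longrightarrow> K \<subset> L \<Longrightarrow> L = UNIV"
    and g: "g \<notin> K" and p: "prime CHAR('a)"
  obtains idx :: "'a \<Rightarrow> nat"
  where "\<And>x y. of_nat (idx (x + y)) = (of_nat (idx x + idx y) :: 'a)" "of_nat (idx g) = (1 :: 'a)"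
proof -
  have "{x. \<exists>j. x - of_nat j * g \<in> K} = UNIV"
  proof (rule Kmax)
    show "add_subgroup {x. \<exists>j. x - of_nat j * g \<in> K}"
      using K p by (intro add_subgroup_adjoin) (auto simp: prime_gt_0_nat)
    have "g - of_nat 1 * g \<in> K" using K by (simp add: add_subgroup_def)
    moreover have "x - of_nat 0 * g \<in> K" if "x \<in> K" for x using that by simp
    ultimately show "K \<subset> {x. \<exists>j. x - of_nat j * g \<in> K}" using g by blast
  qed
  then have "\<exists>j. x - of_nat j * g \<in> K" for x by blast
  then obtain idx where idx: "\<And>x. x - of_nat (idx x) * g \<in> K" by metis
  have idx_unique: "of_nat (idx x) = (of_nat j :: 'a)" if "x - of_nat j * g \<in> K" for x j
    by (rule coset_coefficient_unique[OF K g p idx that])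
  show ?thesis
  proof (rule that[of idx])
    fix x y
    have "(x - of_nat (idx x) * g) + (y - of_nat (idx y) * g) \<in> K"
      using K idx by (simp add: add_subgroup_def)
    then show "of_nat (idx (x + y)) = (of_nat (idx x + idx y) :: 'a)"
      by (intro idx_unique) (simp add: algebra_simps)
  next
    show "of_nat (idx g) = (1 :: 'a)"
      using idx_unique[of g 1] K by (simp add: add_subgroup_def)
  qed
qed

theorem exists_nontrivial_add_character:
  obtains \<psi> :: "'a::{field,finite} \<Rightarrow> complex"
  where "\<And>x y. \<psi> (x + y) = \<psi> x * \<psi> y" "\<And>x. norm (\<psi> x) = 1" "\<exists>g. \<psi> g \<noteq> 1"
proof -
  let ?p = "CHAR('a)"
  have p: "prime ?p" by (rule prime_CHAR_semidom) (simp add: finite_imp_CHAR_pos)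
  obtain K :: "'a set" where K: "add_subgroup K" "K \<noteq> UNIV"
    and Kmax: "\<And>L. add_subgroup L \<Longrightarrow> K \<subset> L \<Longrightarrow> L = UNIV"
    using exists_maximal_proper_add_subgroup[of "1::'a"] by auto
  obtain g where g: "g \<notin> K" using K by auto
  obtain idx :: "'a \<Rightarrow> nat" where idx_add: "\<And>x y. of_nat (idx (x + y)) = (of_nat (idx x + idx y) :: 'a)"
    and idx_g: "of_nat (idx g) = (1 :: 'a)"
    using maximal_add_subgroup_index[OF K(1) Kmax g p] by blast
  define e :: "nat \<Rightarrow> complex" where "e j = exp (2 * of_real pi * \<i> * of_nat j / of_nat ?p)" for j
  have e_eq: "e i = e j" if "of_nat i = (of_nat j :: 'a)" for i j
    using that prime_gt_0_nat[OF p]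
    by (simp add: e_def complex_root_unity_eq of_nat_eq_iff_cong_CHAR cong_def Suc_leI)
  show ?thesis
  proof
    show "e (idx (x + y)) = e (idx x) * e (idx y)" for x y
      using e_eq[OF idx_add] by (simp add: e_def exp_add[symmetric] add_divide_distrib distrib_left)
    show "norm (e (idx x)) = 1" for x by (simp add: e_def norm_exp_eq_Re)
    have "e (idx g) = e 1" using idx_g by (intro e_eq) simp
    moreover have "e 1 \<noteq> 1"
      unfolding e_def by (subst complex_root_unity_eq_1) (use prime_gt_1_nat[OF p] in auto)
    ultimately show "\<exists>g. e (idx g) \<noteq> 1" by (intro exI[of _ g]) simp
  qed
qed

definition binom_majorant :: "real \<Rightarrow> nat \<Rightarrow> real" where
  "binom_majorant A k = (A + real k) gchoose k"

lemma binom_majorant_0 [simp]: "binom_majorant A 0 = 1"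
  by (simp add: binom_majorant_def)

lemma binom_majorant_Suc:
  "real (Suc k) * binom_majorant A (Suc k) = (A + real (Suc k)) * binom_majorant A k"
proof -
  have "real (Suc k) * binom_majorant A (Suc k) = (A + real (Suc k)) * ((A + real (Suc k) - 1) gchoose k)"
    unfolding binom_majorant_def by (rule gbinomial_absorption)
  also have "A + real (Suc k) - 1 = A + real k" by simp
  finally show ?thesis by (simp add: binom_majorant_def)
qed

lemma binom_majorant_nonneg: "A \<ge> 0 \<Longrightarrow> binom_majorant A k \<ge> 0"
proof (induction k)
  case (Suc k)
  then have "real (Suc k) * binom_majorant A (Suc k) \<ge> 0" unfolding binom_majorant_Suc by simp
  then show ?case by (simp add: zero_le_mult_iff)
qed simp

lemma mono_binom_majorant:
  assumes "A \<ge> 0"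
  shows "mono (binom_majorant A)"
  unfolding mono_iff_le_Suc
proof
  fix k
  have "real (Suc k) * binom_majorant A k \<le> (A + real (Suc k)) * binom_majorant A k"
    using assms binom_majorant_nonneg[OF assms] by (intro mult_right_mono) auto
  also have "\<dots> = real (Suc k) * binom_majorant A (Suc k)" by (rule binom_majorant_Suc[symmetric])
  finally show "binom_majorant A k \<le> binom_majorant A (Suc k)" by (rule mult_left_le_imp_le) simp
qed

lemma binom_majorant_sum: "real k * binom_majorant A k = (A + 1) * (\<Sum>i\<in>{0..<k}. binom_majorant A i)"
proof (induction k)
  case (Suc k)
  have "real (Suc k) * binom_majorant A (Suc k) = (A + 1) * binom_majorant A k + real k * binom_majorant A k"
    unfolding binom_majorant_Suc by (simp add: algebra_simps)
  also have "\<dots> = (A + 1) * (\<Sum>i\<in>{0..<Suc k}. binom_majorant A i)"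
    unfolding Suc by (simp add: algebra_simps)
  finally show ?case .
qed simp

lemma sum_residue_class_add:
  fixes f :: "nat \<Rightarrow> 'a::comm_monoid_add"
  assumes p: "p > 0"
  shows "(\<Sum>i\<in>{0..<k + p}. if p dvd (k + p - i) then f i else 0)
    = (\<Sum>i\<in>{0..<k}. if p dvd (k - i) then f i else 0) + f k"
proof -
  have dvd_iff: "p dvd (k + p - i) \<longleftrightarrow> i = k" if "i \<in> {k..<k + p}" for i
  proof
    assume "p dvd (k + p - i)"
    moreover have "0 < k + p - i" "k + p - i \<le> p" using that by auto
    ultimately have "k + p - i = p" by (meson dvd_imp_le le_antisym)
    then show "i = k" using that by auto
  qed simp
  have "(\<Sum>i\<in>{0..<k + p}. if p dvd (k + p - i) then f i else 0)
      = (\<Sum>i\<in>{0..<k}. if p dvd (k + p - i) then f i else 0)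
        + (\<Sum>i\<in>{k..<k + p}. if p dvd (k + p - i) then f i else 0)"
    by (simp add: sum.atLeastLessThan_concat)
  also have "(\<Sum>i\<in>{0..<k}. if p dvd (k + p - i) then f i else 0)
      = (\<Sum>i\<in>{0..<k}. if p dvd (k - i) then f i else 0)"
  proof (intro sum.cong refl)
    fix i assume "i \<in> {0..<k}"
    then have "k + p - i = (k - i) + p" by auto
    then show "(if p dvd (k + p - i) then f i else 0) = (if p dvd (k - i) then f i else 0)" by simp
  qed
  also have "(\<Sum>i\<in>{k..<k + p}. if p dvd (k + p - i) then f i else 0) = (\<Sum>i\<in>{k..<k + p}. if i = k then f i else 0)"
    by (intro sum.cong refl) (simp add: dvd_iff)
  also have "\<dots> = f k" using p by simp
  finally show ?thesis .
qed

text \<open>Each selected term \<open>f i\<close> (with \<open>p dvd k - i\<close>) is at most every term of the block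
  \<open>{i..<i + p}\<close>, and these blocks are disjoint.\<close>
lemma sum_residue_class_le:
  fixes f :: "nat \<Rightarrow> real"
  assumes f: "mono f" "\<And>i. f i \<ge> 0" and p: "p > 0"
  shows "real p * (\<Sum>i\<in>{0..<k}. if p dvd (k - i) then f i else 0) \<le> (\<Sum>i\<in>{0..<k}. f i)"
proof (induction k rule: less_induct)
  case (less k)
  show ?case
  proof (cases "k < p")
    case True
    have "\<not> p dvd (k - i)" if "i < k" for i
      using True that nat_dvd_not_less[of "k - i" p] by auto
    then have "(\<Sum>i\<in>{0..<k}. if p dvd (k - i) then f i else 0) = 0" by (intro sum.neutral) auto
    then show ?thesis by (simp add: sum_nonneg f)
  next
    case False
    define k' where "k' = k - p"
    have kk: "k = k' + p" using False k'_def by simp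
    have "real p * f k' \<le> (\<Sum>i\<in>{k'..<k}. f i)"
      using sum_bounded_below[of "{k'..<k}" "f k'" f] kk f(1) by (simp add: monoD)
    moreover have "(\<Sum>i\<in>{0..<k}. f i) = (\<Sum>i\<in>{0..<k'}. f i) + (\<Sum>i\<in>{k'..<k}. f i)"
      using kk by (simp add: sum.atLeastLessThan_concat)
    moreover have "real p * (\<Sum>i\<in>{0..<k'}. if p dvd (k' - i) then f i else 0) \<le> (\<Sum>i\<in>{0..<k'}. f i)"
      using less kk p by simp
    ultimately show ?thesis
      unfolding kk sum_residue_class_add[OF p] by (simp add: distrib_left)
  qed
qed

lemma binom_majorant_newton_recurrence:
  assumes p: "p > 0" and s: "s \<ge> 0" and n: "0 \<le> n" "n \<le> real p * \<alpha>" and k: "k > 0"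
  shows "(\<Sum>j=1..k. (if p dvd j then n else s) * binom_majorant (s + \<alpha>) (k - j))
    \<le> real k * binom_majorant (s + \<alpha>) k"
proof -
  let ?T = "binom_majorant (s + \<alpha>)"
  have "0 \<le> real p * \<alpha>" using n by linarith
  then have \<alpha>: "\<alpha> \<ge> 0" using p by (simp add: zero_le_mult_iff)
  then have T: "mono ?T" "\<And>i. ?T i \<ge> 0" using s by (auto intro: mono_binom_majorant binom_majorant_nonneg)
  have "(\<Sum>j=1..k. (if p dvd j then n else s) * ?T (k - j))
      = (\<Sum>i\<in>{0..<k}. (if p dvd (k - i) then n else s) * ?T i)"
    by (rule sum.reindex_bij_witness[where i="\<lambda>i. k - i" and j="\<lambda>j. k - j"]) auto
  also have "\<dots> \<le> (\<Sum>i\<in>{0..<k}. s * ?T i + n * (if p dvd (k - i) then ?T i else 0))"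
    by (intro sum_mono) (use s n T in auto)
  also have "\<dots> = s * (\<Sum>i\<in>{0..<k}. ?T i)
      + (n / real p) * (real p * (\<Sum>i\<in>{0..<k}. if p dvd (k - i) then ?T i else 0))"
    using p by (simp add: sum.distrib sum_distrib_left)
  also have "\<dots> \<le> s * (\<Sum>i\<in>{0..<k}. ?T i) + (n / real p) * (\<Sum>i\<in>{0..<k}. ?T i)"
    using sum_residue_class_le[OF T p, of k] n p by (intro add_left_mono mult_left_mono) auto
  also have "\<dots> \<le> s * (\<Sum>i\<in>{0..<k}. ?T i) + (\<alpha> + 1) * (\<Sum>i\<in>{0..<k}. ?T i)"
  proof -
    have "n / real p \<le> \<alpha>" using n p by (simp add: divide_le_eq mult.commute)
    then show ?thesis by (intro add_left_mono mult_right_mono) (auto simp: sum_nonneg T)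
  qed
  also have "\<dots> = real k * ?T k" by (simp add: binom_majorant_sum algebra_simps)
  finally show ?thesis .
qed

definition L2_nonzero :: "('a::zero \<Rightarrow> 'b::real_normed_div_algebra) \<Rightarrow> real" where
  "L2_nonzero g = L2_set (\<lambda>c. norm (g c)) (-{0})"

lemma L2_nonzero_nonneg: "L2_nonzero g \<ge> 0"
  unfolding L2_nonzero_def by (rule L2_set_nonneg)

lemma L2_nonzero_add: "L2_nonzero (\<lambda>c. g c + h c) \<le> L2_nonzero g + L2_nonzero h"
proof -
  have "L2_nonzero (\<lambda>c. g c + h c) \<le> L2_set (\<lambda>c. norm (g c) + norm (h c)) (-{0})"
    unfolding L2_nonzero_def by (rule L2_set_mono) (auto simp: norm_triangle_ineq)
  also have "\<dots> \<le> L2_nonzero g + L2_nonzero h" unfolding L2_nonzero_def by (rule L2_set_triangle_ineq)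
  finally show ?thesis .
qed

lemma L2_nonzero_sum: "L2_nonzero (\<lambda>c. \<Sum>j\<in>J. g j c) \<le> (\<Sum>j\<in>J. L2_nonzero (g j))"
proof (induction J rule: infinite_finite_induct)
  case (insert x F)
  have "L2_nonzero (\<lambda>c. \<Sum>j\<in>insert x F. g j c) \<le> L2_nonzero (g x) + L2_nonzero (\<lambda>c. \<Sum>j\<in>F. g j c)"
    using insert L2_nonzero_add[of "g x"] by simp
  then show ?case using insert by simp
qed (simp_all add: L2_nonzero_def L2_set_def)

lemma L2_nonzero_mult_left: "L2_nonzero (\<lambda>c. a * g c) = norm a * L2_nonzero g"
  unfolding L2_nonzero_def by (simp add: L2_set_right_distrib norm_mult)

lemma L2_nonzero_le_mult:
  assumes "\<And>c. c \<noteq> 0 \<Longrightarrow> norm (g c) \<le> B * norm (h c)" "B \<ge> 0"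
  shows "L2_nonzero g \<le> B * L2_nonzero h"
proof -
  have "L2_nonzero g \<le> L2_set (\<lambda>c. B * norm (h c)) (-{0})"
    unfolding L2_nonzero_def by (rule L2_set_mono) (use assms in auto)
  also have "\<dots> = B * L2_nonzero h"
    unfolding L2_nonzero_def by (rule L2_set_right_distrib[symmetric]) (rule assms(2))
  finally show ?thesis .
qed

lemma norm_sum_mult_le_L2_nonzero: "norm (\<Sum>c\<in>-{0}. g c * h c) \<le> L2_nonzero g * L2_nonzero h"
proof -
  have "norm (\<Sum>c\<in>-{0}. g c * h c) \<le> (\<Sum>c\<in>-{0}. norm (g c) * norm (h c))"
    by (simp add: norm_sum norm_mult flip: norm_mult)
  also have "\<dots> \<le> L2_nonzero g * L2_nonzero h"
    unfolding L2_nonzero_def using L2_set_mult_ineq[of "\<lambda>c. norm (g c)" "\<lambda>c. norm (h c)"] by simp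
  finally show ?thesis .
qed

lemma sum_UNIV_split_zero: "(\<Sum>c\<in>UNIV. g c) = g 0 + (\<Sum>c\<in>-{0::'a::{zero,finite}}. g c)"
  by (simp add: Compl_eq_Diff_UNIV sum.remove)

lemma card_nonzero: "card (-{0::'a::{zero,finite}}) = CARD('a) - 1"
  by (simp add: Compl_eq_Diff_UNIV card_Diff_singleton)

lemma card_UNIV_field_ge_2: "CARD('a::{field,finite}) \<ge> 2"
proof -
  have "card {0::'a, 1} \<le> CARD('a)" by (rule card_mono) auto
  then show ?thesis by simp
qed

locale add_character =
  fixes \<psi> :: "'a::{field,finite} \<Rightarrow> complex"
  assumes psi_add: "\<And>x y. \<psi> (x + y) = \<psi> x * \<psi> y"
    and norm_psi: "\<And>x. norm (\<psi> x) = 1"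
    and psi_nontrivial: "\<exists>g. \<psi> g \<noteq> 1"
begin

lemma psi_0 [simp]: "\<psi> 0 = 1"
proof -
  have "\<psi> 0 * \<psi> 0 = \<psi> 0 * 1" using psi_add[of 0 0] by simp
  moreover have "\<psi> 0 \<noteq> 0" using norm_psi[of 0] by auto
  ultimately show ?thesis by (metis mult_left_cancel)
qed

lemma psi_uminus: "\<psi> (- x) = cnj (\<psi> x)"
proof -
  have "\<psi> x * \<psi> (- x) = \<psi> x * cnj (\<psi> x)"
    using psi_add[of x "- x"] complex_norm_square[of "\<psi> x"] norm_psi[of x] by simp
  moreover have "\<psi> x \<noteq> 0" using norm_psi[of x] by auto
  ultimately show ?thesis by simp
qed

lemma psi_sum: "\<psi> (\<Sum>a\<in>B. f a) = (\<Prod>a\<in>B. \<psi> (f a))"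
  by (induction B rule: infinite_finite_induct) (auto simp: psi_add)

lemma power_psi: "\<psi> x ^ j = \<psi> (of_nat j * x)"
  by (induction j) (auto simp: psi_add distrib_right)

lemma sum_psi_mult: "(\<Sum>c\<in>UNIV. \<psi> (c * x)) = (if x = 0 then of_nat CARD('a) else 0)"
proof (cases "x = 0")
  case False
  obtain g where g: "\<psi> g \<noteq> 1" using psi_nontrivial by auto
  have "(\<Sum>c\<in>UNIV. \<psi> (c * x)) = (\<Sum>c\<in>UNIV. \<psi> c)"
    using sum.reindex_bij_betw[OF bij_betwI[where g="\<lambda>c. c / x"], of "\<lambda>c. c * x" UNIV UNIV \<psi>] False
    by auto
  moreover have "\<psi> g * (\<Sum>c\<in>UNIV. \<psi> c) = (\<Sum>c\<in>UNIV. \<psi> c)"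
  proof -
    have "\<psi> g * (\<Sum>c\<in>UNIV. \<psi> c) = (\<Sum>c\<in>UNIV. \<psi> (g + c))" by (simp add: psi_add sum_distrib_left)
    also have "\<dots> = (\<Sum>c\<in>UNIV. \<psi> c)"
      by (rule sum.reindex_bij_betw[OF bij_betwI[where g="\<lambda>c. c - g"]]) auto
    finally show ?thesis .
  qed
  then have "(\<psi> g - 1) * (\<Sum>c\<in>UNIV. \<psi> c) = 0" by (simp add: algebra_simps)
  ultimately show ?thesis using g False by simp
qed simp

end

locale subgroup_character = add_character \<psi> for \<psi> :: "'a::{field,finite} \<Rightarrow> complex" +
  fixes H :: "'a set"
  assumes subgroup: "mult_subgroup H"
begin

lemma zero_notin_H: "0 \<notin> H" and one_in_H: "1 \<in> H"
  and H_mult: "\<And>x y. x \<in> H \<Longrightarrow> y \<in> H \<Longrightarrow> x * y \<in> H"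
  and H_inverse: "\<And>x. x \<in> H \<Longrightarrow> inverse x \<in> H"
  using subgroup unfolding mult_subgroup_def by auto

lemma card_H_pos: "card H > 0"
  using one_in_H by (auto simp: card_gt_0_iff)

lemma bij_betw_mult_H:
  assumes h: "h \<in> H"
  shows "bij_betw (\<lambda>a. h * a) H H"
proof -
  have "h \<noteq> 0" using h zero_notin_H by auto
  then show ?thesis
    by (intro bij_betwI[where g="\<lambda>a. inverse h * a"])
      (use h H_mult H_inverse in \<open>auto simp: mult.assoc[symmetric]\<close>)
qed

definition gauss_period :: "'a \<Rightarrow> complex" where
  "gauss_period d = (\<Sum>a\<in>H. \<psi> (d * a))"

lemma gauss_period_mult_H: "h \<in> H \<Longrightarrow> gauss_period (d * h) = gauss_period d"
  unfolding gauss_period_def using sum.reindex_bij_betw[OF bij_betw_mult_H, of h "\<lambda>a. \<psi> (d * a)"]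
  by (simp add: mult.assoc)

lemma gauss_period_0 [simp]: "gauss_period 0 = of_nat (card H)"
  by (simp add: gauss_period_def)

lemma sum_norm_gauss_period_sq: "(\<Sum>c\<in>UNIV. (norm (gauss_period c))\<^sup>2) = real CARD('a) * real (card H)"
proof -
  have "complex_of_real (\<Sum>c\<in>UNIV. (norm (gauss_period c))\<^sup>2) = (\<Sum>c\<in>UNIV. gauss_period c * cnj (gauss_period c))"
    by (simp only: of_real_sum complex_norm_square)
  also have "\<dots> = (\<Sum>c\<in>UNIV. \<Sum>a\<in>H. \<Sum>a'\<in>H. \<psi> (c * (a - a')))"
  proof (rule sum.cong[OF refl])
    fix c
    have "gauss_period c * cnj (gauss_period c) = (\<Sum>a\<in>H. \<Sum>a'\<in>H. \<psi> (c * a) * \<psi> (- (c * a')))"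
      unfolding gauss_period_def cnj_sum psi_uminus[symmetric] by (rule sum_product)
    also have "\<dots> = (\<Sum>a\<in>H. \<Sum>a'\<in>H. \<psi> (c * (a - a')))"
      by (simp add: psi_add[symmetric] algebra_simps)
    finally show "gauss_period c * cnj (gauss_period c) = (\<Sum>a\<in>H. \<Sum>a'\<in>H. \<psi> (c * (a - a')))" .
  qed
  also have "\<dots> = (\<Sum>a\<in>H. \<Sum>a'\<in>H. \<Sum>c\<in>UNIV. \<psi> (c * (a - a')))"
    by (subst sum.swap) (simp add: sum.swap[of _ UNIV])
  also have "\<dots> = (\<Sum>a\<in>H. \<Sum>a'\<in>H. if a = a' then of_nat CARD('a) else 0)"
    by (simp add: sum_psi_mult)
  also have "\<dots> = complex_of_real (real CARD('a) * real (card H))" by simp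
  finally show ?thesis by (simp only: of_real_eq_iff)
qed

lemma norm_gauss_period_le:
  assumes "d \<noteq> 0"
  shows "norm (gauss_period d) \<le> sqrt CARD('a)"
proof -
  have "real (card H) * (norm (gauss_period d))\<^sup>2 = (\<Sum>h\<in>H. (norm (gauss_period (d * h)))\<^sup>2)"
    by (simp add: gauss_period_mult_H)
  also have "\<dots> = (\<Sum>c\<in>(\<lambda>h. d * h) ` H. (norm (gauss_period c))\<^sup>2)"
    by (rule sum.reindex[symmetric, unfolded comp_def]) (simp add: assms inj_on_def)
  also have "\<dots> \<le> (\<Sum>c\<in>UNIV. (norm (gauss_period c))\<^sup>2)"
    by (rule sum_mono2) auto
  also have "\<dots> = real (card H) * real CARD('a)" by (simp add: sum_norm_gauss_period_sq)
  finally have "(norm (gauss_period d))\<^sup>2 \<le> real CARD('a)"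
    using card_H_pos by (simp add: mult_le_cancel_left_pos)
  then show ?thesis by (rule real_le_rsqrt)
qed

lemma L2_nonzero_gauss_period:
  assumes x: "x \<noteq> 0"
  shows "L2_nonzero (\<lambda>c. gauss_period (x * c)) \<le> sqrt (real CARD('a) * real (card H))"
proof -
  have "(\<Sum>c\<in>-{0}. (norm (gauss_period (x * c)))\<^sup>2) = (\<Sum>c\<in>-{0}. (norm (gauss_period c))\<^sup>2)"
    by (rule sum.reindex_bij_betw[OF bij_betwI[where g="\<lambda>c. c / x"]]) (use x in auto)
  also have "\<dots> \<le> (\<Sum>c\<in>UNIV. (norm (gauss_period c))\<^sup>2)" by (rule sum_mono2) auto
  finally show ?thesis
    unfolding L2_nonzero_def L2_set_def sum_norm_gauss_period_sq by simp
qed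

end

lemma abs_diff_divide_le:
  fixes q x y B :: real
  assumes "q > 0" "\<bar>q * x - y\<bar> \<le> q * B"
  shows "\<bar>x - y / q\<bar> \<le> B"
proof -
  have "\<bar>x - y / q\<bar> = \<bar>q * x - y\<bar> / q" using assms(1) by (simp add: field_simps abs_divide)
  then show ?thesis using assms by (simp add: divide_le_eq mult.commute)
qed

lemma abs_of_nat_diff_eq_norm:
  "\<bar>real a * real b - real c\<bar> = norm (of_nat a * of_nat b - of_nat c :: complex)"
  by (metis norm_of_real of_real_diff of_real_mult of_real_of_nat_eq)

text \<open>The solution of Newton's recursion for power sums equal to \<open>n\<close> at multiples of \<open>p\<close> and
  to \<open>0\<close> elsewhere. In characteristic \<open>p\<close> the power sums at multiples of \<open>p\<close> are the only ones
  independent of the frequency, so this is the common main term of all \<open>char_esym c k\<close>.\<close>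
fun newton_char_part :: "nat \<Rightarrow> nat \<Rightarrow> nat \<Rightarrow> complex" where
  "newton_char_part p n k = (if k = 0 then 1 else
     (\<Sum>j\<in>{1..k}. if p dvd j then (-1) ^ (j - 1) * of_nat n * newton_char_part p n (k - j) else 0)
       / of_nat k)"

declare newton_char_part.simps [simp del]

lemma newton_char_part_0 [simp]: "newton_char_part p n 0 = 1"
  by (simp add: newton_char_part.simps)

lemma newton_char_part_recurrence:
  "k > 0 \<Longrightarrow> of_nat k * newton_char_part p n k =
     (\<Sum>j\<in>{1..k}. if p dvd j then (-1) ^ (j - 1) * of_nat n * newton_char_part p n (k - j) else 0)"
  by (subst newton_char_part.simps) simp

context subgroup_character
begin

definition char_esym :: "'a \<Rightarrow> nat \<Rightarrow> complex" where
  "char_esym c k = elementary_symmetric (\<lambda>a. \<psi> (c * a)) H k"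

lemma char_esym_eq: "char_esym c k = (\<Sum>B | B \<subseteq> H \<and> card B = k. \<psi> (c * (\<Sum>a\<in>B. a)))"
  unfolding char_esym_def elementary_symmetric_def by (simp add: sum_distrib_left psi_sum)

lemma sum_char_esym_eq_count:
  "(\<Sum>c\<in>UNIV. \<psi> (- (c * b)) * char_esym c k) = of_nat CARD('a) * of_nat (subset_sum_count H k b)"
proof -
  let ?Sub = "{B. B \<subseteq> H \<and> card B = k}"
  have "(\<Sum>c\<in>UNIV. \<psi> (- (c * b)) * char_esym c k)
      = (\<Sum>c\<in>UNIV. \<Sum>B\<in>?Sub. \<psi> (c * ((\<Sum>a\<in>B. a) - b)))"
    by (simp add: char_esym_eq sum_distrib_left psi_add[symmetric] algebra_simps)
  also have "\<dots> = (\<Sum>B\<in>?Sub. \<Sum>c\<in>UNIV. \<psi> (c * ((\<Sum>a\<in>B. a) - b)))" by (rule sum.swap)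
  also have "\<dots> = (\<Sum>B\<in>?Sub. if (\<Sum>a\<in>B. a) = b then of_nat CARD('a) else 0)"
    by (simp add: sum_psi_mult)
  also have "\<dots> = of_nat CARD('a) * of_nat (card {B \<in> ?Sub. (\<Sum>a\<in>B. a) = b})"
    by (simp add: sum.inter_filter[symmetric])
  also have "{B \<in> ?Sub. (\<Sum>a\<in>B. a) = b} = {S. S \<subseteq> H \<and> card S = k \<and> (\<Sum>a\<in>S. a) = b}" by auto
  finally show ?thesis by (simp add: subset_sum_count_def)
qed

lemma char_esym_zero_freq: "char_esym 0 k = of_nat (card H choose k)"
  unfolding char_esym_def elementary_symmetric_def by (simp add: n_subsets)

lemma char_esym_0 [simp]: "char_esym c 0 = 1"
proof -
  have "{B. B \<subseteq> H \<and> card B = 0} = {{}}" using finite_subset[of _ H] by auto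
  then show ?thesis unfolding char_esym_def elementary_symmetric_def by simp
qed

lemma char_esym_mult_H:
  assumes h: "h \<in> H"
  shows "char_esym (c * h) k = char_esym c k"
proof -
  have "(\<Prod>a\<in>H. 1 + fps_const (\<psi> (c * h * a)) * fps_X) = (\<Prod>a\<in>H. 1 + fps_const (\<psi> (c * a)) * fps_X)"
    using prod.reindex_bij_betw[OF bij_betw_mult_H[OF h], of "\<lambda>a. 1 + fps_const (\<psi> (c * a)) * fps_X"]
    by (simp add: mult.assoc)
  then show ?thesis unfolding char_esym_def fps_nth_prod_linear[OF finite, symmetric] by simp
qed

lemma newton_char_esym:
  "of_nat k * char_esym c k = (\<Sum>j=1..k. (-1) ^ (j - 1) * gauss_period (of_nat j * c) * char_esym c (k - j))"
  unfolding char_esym_def newton_identity[OF finite]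
  by (intro sum.cong refl) (simp add: gauss_period_def power_psi mult.assoc)

definition main_term :: "nat \<Rightarrow> complex" where
  "main_term k = newton_char_part CHAR('a) (card H) k"

definition esym_error :: "'a \<Rightarrow> nat \<Rightarrow> complex" where
  "esym_error c k = char_esym c k - main_term k"

lemma esym_error_mult_H: "h \<in> H \<Longrightarrow> esym_error (c * h) k = esym_error c k"
  by (simp add: esym_error_def char_esym_mult_H)

lemma esym_error_0 [simp]: "esym_error c 0 = 0"
  by (simp add: esym_error_def main_term_def)

lemma esym_error_recurrence:
  assumes k: "k > 0"
  shows "of_nat k * esym_error c k = (\<Sum>j=1..k. (-1) ^ (j - 1) *
     (if CHAR('a) dvd j then of_nat (card H) * esym_error c (k - j)
      else gauss_period (of_nat j * c) * char_esym c (k - j)))"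
proof -
  have "of_nat k * esym_error c k = of_nat k * char_esym c k - of_nat k * main_term k"
    by (simp add: esym_error_def algebra_simps)
  also have "\<dots> = (\<Sum>j=1..k. (-1) ^ (j - 1) * gauss_period (of_nat j * c) * char_esym c (k - j)
      - (if CHAR('a) dvd j then (-1) ^ (j - 1) * of_nat (card H) * main_term (k - j) else 0))"
    unfolding newton_char_esym main_term_def newton_char_part_recurrence[OF k] sum_subtractf ..
  also have "\<dots> = (\<Sum>j=1..k. (-1) ^ (j - 1) *
     (if CHAR('a) dvd j then of_nat (card H) * esym_error c (k - j)
      else gauss_period (of_nat j * c) * char_esym c (k - j)))"
    by (intro sum.cong refl) (auto simp: esym_error_def algebra_simps of_nat_eq_0_iff_char_dvd[symmetric])
  finally show ?thesis .
qed

lemma norm_main_term_recurrence: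
  assumes k: "k > 0"
  shows "real k * norm (main_term k)
    \<le> (\<Sum>j=1..k. if CHAR('a) dvd j then real (card H) * norm (main_term (k - j)) else 0)"
proof -
  have "real k * norm (main_term k)
      = norm (\<Sum>j\<in>{1..k}. if CHAR('a) dvd j then (-1) ^ (j - 1) * of_nat (card H) * main_term (k - j) else 0)"
    unfolding main_term_def newton_char_part_recurrence[OF k, symmetric] by (simp add: norm_mult)
  also have "\<dots> \<le> (\<Sum>j\<in>{1..k}. norm (if CHAR('a) dvd j then (-1) ^ (j - 1) * of_nat (card H) * main_term (k - j) else 0))"
    by (rule norm_sum)
  also have "\<dots> = (\<Sum>j=1..k. if CHAR('a) dvd j then real (card H) * norm (main_term (k - j)) else 0)"
    by (intro sum.cong refl) (simp add: norm_mult norm_power)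
  finally show ?thesis .
qed

text \<open>Split \<open>char_esym = main_term + esym_error\<close>: the main term meets the \<open>L\<^sup>2\<close> bound on
  the Gauss periods, the error term their \<open>L\<^sup>\<infinity>\<close> bound.\<close>
lemma L2_nonzero_gauss_period_char_esym:
  assumes j: "\<not> CHAR('a) dvd j"
  shows "L2_nonzero (\<lambda>c. gauss_period (of_nat j * c) * char_esym c i)
    \<le> norm (main_term i) * sqrt (real CARD('a) * real (card H))
      + sqrt CARD('a) * L2_nonzero (\<lambda>c. esym_error c i)"
proof -
  have jnz: "(of_nat j :: 'a) \<noteq> 0" using j by (simp add: of_nat_eq_0_iff_char_dvd)
  have "(\<lambda>c. gauss_period (of_nat j * c) * char_esym c i)
      = (\<lambda>c. main_term i * gauss_period (of_nat j * c) + gauss_period (of_nat j * c) * esym_error c i)"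
    by (simp add: esym_error_def algebra_simps)
  then have "L2_nonzero (\<lambda>c. gauss_period (of_nat j * c) * char_esym c i)
      \<le> L2_nonzero (\<lambda>c. main_term i * gauss_period (of_nat j * c))
        + L2_nonzero (\<lambda>c. gauss_period (of_nat j * c) * esym_error c i)"
    by (simp only: L2_nonzero_add)
  also have "L2_nonzero (\<lambda>c. main_term i * gauss_period (of_nat j * c))
      \<le> norm (main_term i) * sqrt (real CARD('a) * real (card H))"
    unfolding L2_nonzero_mult_left by (intro mult_left_mono L2_nonzero_gauss_period jnz) simp
  also have "L2_nonzero (\<lambda>c. gauss_period (of_nat j * c) * esym_error c i)
      \<le> sqrt CARD('a) * L2_nonzero (\<lambda>c. esym_error c i)"
  proof (rule L2_nonzero_le_mult)
    fix c :: 'a assume "c \<noteq> 0"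
    then have "norm (gauss_period (of_nat j * c)) \<le> sqrt CARD('a)"
      using jnz by (intro norm_gauss_period_le) simp
    then show "norm (gauss_period (of_nat j * c) * esym_error c i) \<le> sqrt CARD('a) * norm (esym_error c i)"
      by (simp add: norm_mult mult_right_mono)
  qed simp
  finally show ?thesis by simp
qed

lemma L2_nonzero_esym_error_recurrence:
  assumes k: "k > 0"
  shows "real k * L2_nonzero (\<lambda>c. esym_error c k)
    \<le> (\<Sum>j=1..k. if CHAR('a) dvd j then real (card H) * L2_nonzero (\<lambda>c. esym_error c (k - j))
        else norm (main_term (k - j)) * sqrt (real CARD('a) * real (card H))
          + sqrt CARD('a) * L2_nonzero (\<lambda>c. esym_error c (k - j)))"
proof -
  have "real k * L2_nonzero (\<lambda>c. esym_error c k) = L2_nonzero (\<lambda>c. of_nat k * esym_error c k)"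
    by (simp add: L2_nonzero_mult_left)
  also have "\<dots> \<le> (\<Sum>j=1..k. L2_nonzero (\<lambda>c. (-1) ^ (j - 1) *
     (if CHAR('a) dvd j then of_nat (card H) * esym_error c (k - j)
      else gauss_period (of_nat j * c) * char_esym c (k - j))))"
    unfolding esym_error_recurrence[OF k] by (rule L2_nonzero_sum)
  also have "\<dots> \<le> (\<Sum>j=1..k. if CHAR('a) dvd j then real (card H) * L2_nonzero (\<lambda>c. esym_error c (k - j))
        else norm (main_term (k - j)) * sqrt (real CARD('a) * real (card H))
          + sqrt CARD('a) * L2_nonzero (\<lambda>c. esym_error c (k - j)))"
    by (intro sum_mono)
      (auto simp: L2_nonzero_mult_left norm_power L2_nonzero_gauss_period_char_esym)
  finally show ?thesis .
qed

definition newton_weight :: "nat \<Rightarrow> real" where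
  "newton_weight j = (if CHAR('a) dvd j then real (card H) else sqrt CARD('a))"

definition error_size :: "nat \<Rightarrow> real" where
  "error_size k = norm (main_term k) + L2_nonzero (\<lambda>c. esym_error c k) / sqrt (card H)"

lemma error_size_0 [simp]: "error_size 0 = 1"
  by (simp add: error_size_def main_term_def L2_nonzero_def L2_set_def)

lemma error_size_recurrence:
  assumes k: "k > 0"
  shows "real k * error_size k \<le> (\<Sum>j=1..k. newton_weight j * error_size (k - j))"
proof -
  let ?p = "CHAR('a)" and ?q = "real CARD('a)" and ?n = "real (card H)"
  let ?L = "\<lambda>i. L2_nonzero (\<lambda>c. esym_error c i)"
  have n: "sqrt ?n > 0" using card_H_pos by simp
  have "real k * error_size k = real k * norm (main_term k) + real k * ?L k / sqrt ?n"
    by (simp add: error_size_def algebra_simps)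
  also have "\<dots> \<le> (\<Sum>j=1..k. if ?p dvd j then ?n * norm (main_term (k - j)) else 0)
      + (\<Sum>j=1..k. if ?p dvd j then ?n * ?L (k - j)
          else norm (main_term (k - j)) * sqrt (?q * ?n) + sqrt ?q * ?L (k - j)) / sqrt ?n"
    using norm_main_term_recurrence[OF k] L2_nonzero_esym_error_recurrence[OF k] n
    by (intro add_mono divide_right_mono) auto
  also have "\<dots> = (\<Sum>j=1..k. newton_weight j * error_size (k - j))"
    unfolding sum_divide_distrib sum.distrib[symmetric] using n
    by (intro sum.cong refl) (auto simp: newton_weight_def error_size_def real_sqrt_mult add_divide_distrib algebra_simps)
  finally show ?thesis .
qed

lemma error_size_le_binom_majorant:
  assumes "real (card H) \<le> real CHAR('a) * \<alpha>"
  shows "error_size k \<le> binom_majorant (sqrt CARD('a) + \<alpha>) k"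
proof (induction k rule: less_induct)
  case (less k)
  show ?case
  proof (cases "k = 0")
    case False
    then have k: "k > 0" by simp
    have "real k * error_size k \<le> (\<Sum>j=1..k. newton_weight j * error_size (k - j))"
      by (rule error_size_recurrence[OF k])
    also have "\<dots> \<le> (\<Sum>j=1..k. newton_weight j * binom_majorant (sqrt CARD('a) + \<alpha>) (k - j))"
      using less k by (intro sum_mono mult_left_mono) (auto simp: newton_weight_def)
    also have "\<dots> \<le> real k * binom_majorant (sqrt CARD('a) + \<alpha>) k"
      unfolding newton_weight_def
      by (rule binom_majorant_newton_recurrence) (use assms k finite_imp_CHAR_pos[where 'a='a] in auto)
    finally show ?thesis using k by simp
  qed simp
qed

lemma card_mult_count_eq:
  "of_nat CARD('a) * of_nat (subset_sum_count H k b)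
    = of_nat (card H choose k) + (\<Sum>c\<in>-{0}. \<psi> (- (c * b)) * char_esym c k)"
  by (simp add: sum_char_esym_eq_count[symmetric] sum_UNIV_split_zero char_esym_zero_freq)

lemma sum_nonzero_psi:
  assumes "b \<noteq> 0"
  shows "(\<Sum>c\<in>-{0}. \<psi> (- (c * b))) = -1"
proof -
  have "1 + (\<Sum>c\<in>-{0}. \<psi> (c * (- b))) = 0"
    using assms sum_psi_mult[of "- b"] by (simp add: sum_UNIV_split_zero)
  then show ?thesis by (simp add: eq_neg_iff_add_eq_0 add.commute)
qed

text \<open>Averaging over the substitutions \<open>c \<mapsto> c h\<close>, \<open>h \<in> H\<close>, which fix \<open>esym_error\<close>, turns
  the additive twist into a Gauss period, whose \<open>L\<^sup>2\<close> norm is \<open>sqrt (q n)\<close>.\<close>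
lemma norm_twisted_esym_error_le:
  assumes b: "b \<noteq> 0"
  shows "norm (\<Sum>c\<in>-{0}. \<psi> (- (c * b)) * esym_error c k)
    \<le> sqrt CARD('a) * (L2_nonzero (\<lambda>c. esym_error c k) / sqrt (card H))"
proof -
  define X where "X = (\<Sum>c\<in>-{0}. \<psi> (- (c * b)) * esym_error c k)"
  have X_H: "X = (\<Sum>c\<in>-{0}. \<psi> (- (c * h * b)) * esym_error c k)" if h: "h \<in> H" for h
  proof -
    have "h \<noteq> 0" using h zero_notin_H by auto
    then have "X = (\<Sum>c\<in>-{0}. \<psi> (- ((c * h) * b)) * esym_error (c * h) k)"
      unfolding X_def by (intro sum.reindex_bij_betw[symmetric] bij_betwI[where g="\<lambda>c. c / h"]) auto
    then show ?thesis by (simp add: esym_error_mult_H[OF h])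
  qed
  have "of_nat (card H) * X = (\<Sum>h\<in>H. X)" by simp
  also have "\<dots> = (\<Sum>h\<in>H. \<Sum>c\<in>-{0}. \<psi> (- (c * h * b)) * esym_error c k)"
    using X_H by (rule sum.cong[OF refl])
  also have "\<dots> = (\<Sum>c\<in>-{0}. esym_error c k * gauss_period ((- b) * c))"
    unfolding gauss_period_def by (subst sum.swap) (simp add: sum_distrib_left mult_ac)
  finally have "real (card H) * norm X \<le> L2_nonzero (\<lambda>c. esym_error c k) * L2_nonzero (\<lambda>c. gauss_period ((- b) * c))"
    by (metis norm_mult norm_of_nat norm_sum_mult_le_L2_nonzero)
  also have "\<dots> \<le> L2_nonzero (\<lambda>c. esym_error c k) * (sqrt CARD('a) * sqrt (card H))"
    using b L2_nonzero_gauss_period[of "- b"]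
    by (intro mult_left_mono L2_nonzero_nonneg) (simp_all flip: real_sqrt_mult)
  finally have "sqrt (card H) * (sqrt (card H) * norm X) \<le> sqrt (card H) * (L2_nonzero (\<lambda>c. esym_error c k) * sqrt CARD('a))"
    by (simp only: real_sqrt_mult_self mult.assoc[symmetric]) (simp only: mult_ac)
  then have "sqrt (card H) * norm X \<le> L2_nonzero (\<lambda>c. esym_error c k) * sqrt CARD('a)"
    using card_H_pos by (simp add: mult_le_cancel_left_pos)
  then show ?thesis using card_H_pos by (simp add: X_def field_simps)
qed

lemma count_deviation_nonzero:
  assumes b: "b \<noteq> 0"
  shows "\<bar>real (subset_sum_count H k b) - real (card H choose k) / CARD('a)\<bar> \<le> error_size k / sqrt CARD('a)"
proof (rule abs_diff_divide_le)
  let ?X = "\<Sum>c\<in>-{0}. \<psi> (- (c * b)) * esym_error c k"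
  have "\<psi> (- (c * b)) * char_esym c k = main_term k * \<psi> (- (c * b)) + \<psi> (- (c * b)) * esym_error c k" for c
    by (simp add: esym_error_def algebra_simps)
  then have "(\<Sum>c\<in>-{0}. \<psi> (- (c * b)) * char_esym c k) = main_term k * (\<Sum>c\<in>-{0}. \<psi> (- (c * b))) + ?X"
    by (simp add: sum.distrib sum_distrib_left)
  then have "of_nat CARD('a) * of_nat (subset_sum_count H k b) - of_nat (card H choose k) = - main_term k + ?X"
    using card_mult_count_eq[of k b] sum_nonzero_psi[OF b] by simp
  then have "\<bar>real CARD('a) * real (subset_sum_count H k b) - real (card H choose k)\<bar> = norm (- main_term k + ?X)"
    by (simp add: abs_of_nat_diff_eq_norm)
  also have "\<dots> \<le> norm (main_term k) + norm ?X"
    using norm_triangle_ineq[of "- main_term k" ?X] by simp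
  also have "\<dots> \<le> sqrt CARD('a) * error_size k"
  proof -
    have "norm (main_term k) \<le> sqrt CARD('a) * norm (main_term k)"
      using card_UNIV_field_ge_2[where 'a='a] mult_right_mono[of 1 "sqrt CARD('a)" "norm (main_term k)"] by simp
    then show ?thesis using norm_twisted_esym_error_le[OF b, of k] by (simp add: error_size_def distrib_left)
  qed
  also have "\<dots> = real CARD('a) * (error_size k / sqrt CARD('a))"
    by (simp add: field_simps)
  finally show "\<bar>real CARD('a) * real (subset_sum_count H k b) - real (card H choose k)\<bar>
      \<le> real CARD('a) * (error_size k / sqrt CARD('a))" .
qed simp

lemma count_deviation_zero:
  "\<bar>real (subset_sum_count H k 0) - real (card H choose k) / CARD('a)\<bar> \<le> error_size k"
proof (rule abs_diff_divide_le)
  let ?L = "L2_nonzero (\<lambda>c. esym_error c k)"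
  let ?X = "\<Sum>c\<in>-{0::'a}. esym_error c k"
  have "(\<Sum>c\<in>-{0::'a}. char_esym c k) = of_nat (CARD('a) - 1) * main_term k + ?X"
    by (simp add: esym_error_def sum_subtractf card_nonzero)
  then have "of_nat CARD('a) * of_nat (subset_sum_count H k 0) - of_nat (card H choose k)
      = of_nat (CARD('a) - 1) * main_term k + ?X"
    using card_mult_count_eq[of k 0] by simp
  then have "\<bar>real CARD('a) * real (subset_sum_count H k 0) - real (card H choose k)\<bar>
      = norm (of_nat (CARD('a) - 1) * main_term k + ?X)"
    by (simp add: abs_of_nat_diff_eq_norm)
  also have "\<dots> \<le> real (CARD('a) - 1) * norm (main_term k) + norm ?X"
    using norm_triangle_ineq[of "of_nat (CARD('a) - 1) * main_term k" ?X] by (simp only: norm_mult norm_of_nat)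
  also have "norm ?X \<le> ?L * sqrt (real (CARD('a) - 1))"
    using norm_sum_mult_le_L2_nonzero[of "\<lambda>c. esym_error c k" "\<lambda>_. 1"]
    by (simp add: L2_nonzero_def L2_set_constant card_nonzero)
  also have "\<dots> \<le> ?L * (real CARD('a) / sqrt (card H))"
  proof (intro mult_left_mono L2_nonzero_nonneg)
    have "sqrt (real (CARD('a) - 1)) * sqrt (card H) \<le> sqrt CARD('a) * sqrt CARD('a)"
      using card_mono[of UNIV H] by (intro mult_mono) auto
    then show "sqrt (real (CARD('a) - 1)) \<le> real CARD('a) / sqrt (card H)"
      using card_H_pos by (simp add: field_simps)
  qed
  also have "real (CARD('a) - 1) * norm (main_term k) + ?L * (real CARD('a) / sqrt (card H))
      \<le> real CARD('a) * error_size k"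
    using mult_right_mono[of "real (CARD('a) - 1)" "real CARD('a)" "norm (main_term k)"]
    by (simp add: error_size_def distrib_left mult.commute)
  finally show "\<bar>real CARD('a) * real (subset_sum_count H k 0) - real (card H choose k)\<bar>
      \<le> real CARD('a) * error_size k" by simp
qed simp

end

theorem mainTheorem1:
  fixes H :: "'a::{field,finite} set" and m k :: nat
  defines "q \<equiv> card (UNIV :: 'a set)" and "p \<equiv> semiring_char TYPE('a)"
  assumes "m > 0" and "m dvd q - 1"
    and "mult_subgroup H" and "card H = (q - 1) div m"
    and "1 \<le> k" and "k \<le> (q - 1) div m"
  shows "(\<forall>b::'a. b \<noteq> 0 \<longrightarrow>
           \<bar>real (subset_sum_count H k b) - (1 / real q) * real (((q - 1) div m) choose k)\<bar>
             \<le> (2 / sqrt (real q)) * ((sqrt (real q) + real k + real q / (real m * real p)) gchoose k))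
      \<and> \<bar>real (subset_sum_count H k 0) - (1 / real q) * real (((q - 1) div m) choose k)\<bar>
             \<le> (sqrt (real q) + real k + real q / (real m * real p)) gchoose k"
proof -
  obtain \<psi> :: "'a \<Rightarrow> complex" where "add_character \<psi>"
    using exists_nontrivial_add_character by (metis add_character.intro)
  then interpret subgroup_character \<psi> H
    using \<open>mult_subgroup H\<close> by (simp add: subgroup_character_def subgroup_character_axioms_def)
  define T where "T = binom_majorant (sqrt (real q) + real q / (real m * real p)) k"
  have T_eq: "(sqrt (real q) + real k + real q / (real m * real p)) gchoose k = T"
    by (simp add: T_def binom_majorant_def add_ac)
  have main_eq: "(1 / real q) * real (((q - 1) div m) choose k) = real (card H choose k) / CARD('a)"
    by (simp add: q_def \<open>card H = (q - 1) div m\<close>)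
  have "real (card H) = real (q - 1) / real m"
    unfolding \<open>card H = (q - 1) div m\<close> by (rule real_of_nat_div[OF \<open>m dvd q - 1\<close>])
  also have "\<dots> \<le> real q / real m" by (intro divide_right_mono) auto
  also have "\<dots> = real p * (real q / (real m * real p))"
    using finite_imp_CHAR_pos[where 'a='a] by (simp add: p_def)
  finally have "error_size k \<le> T"
    unfolding T_def q_def p_def by (rule error_size_le_binom_majorant)
  moreover have "0 \<le> T" by (simp add: T_def binom_majorant_nonneg)
  moreover have "sqrt (real q) > 0" using card_UNIV_field_ge_2[where 'a='a] by (simp add: q_def)
  ultimately have "error_size k / sqrt CARD('a) \<le> 2 / sqrt (real q) * T"
    by (simp add: q_def divide_right_mono order_trans[OF _ mult_right_mono[of 1 2 T]])
  then show ?thesis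
    using count_deviation_nonzero[of _ k] count_deviation_zero[of k] \<open>error_size k \<le> T\<close>
    unfolding T_eq main_eq by (auto intro: order_trans)
qed

end
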